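(* Let $p$ be an odd prime, let $G$ be a quasi-powerful $p$-group and let $H=G^{p}Z(G)$. Then $H$ is powerfully embedded in $G$, i.e. $[H,G]\le H^{p}$.
   Context: For an odd prime $p$, a finite $p$-group $G$ is powerful if $[G,G]\le G^{p}$ (where $G^{p}=\langle g^p\mid g\in G\rangle$), and $G$ is quasi-powerful if $G/Z(G)$ is powerful. A subgroup $N$ of $G$ is powerfully embedded in $G$ if $[N,G]\le N^{p}$. *)

theory Defs
  imports "HOL-Algebra.Algebra"
begin

definition center :: "('a, 'b) monoid_scheme \<Rightarrow> 'a set" where
  "center G = {z \<in> carrier G. \<forall>g \<in> carrier G. z \<otimes>\<^bsub>G\<^esub> g = g \<otimes>\<^bsub>G\<^esub> z}"

definition comm_subgroup :: "('a, 'b) monoid_scheme \<Rightarrow> 'a set \<Rightarrow> 'a set \<Rightarrow> 'a set" where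
  "comm_subgroup G A B = generate G
     {inv\<^bsub>G\<^esub> x \<otimes>\<^bsub>G\<^esub> inv\<^bsub>G\<^esub> y \<otimes>\<^bsub>G\<^esub> x \<otimes>\<^bsub>G\<^esub> y | x y. x \<in> A \<and> y \<in> B}"

definition pow_subgroup :: "('a, 'b) monoid_scheme \<Rightarrow> nat \<Rightarrow> 'a set \<Rightarrow> 'a set" where
  "pow_subgroup G p A = generate G {x [^]\<^bsub>G\<^esub> p | x. x \<in> A}"

definition p_group :: "('a, 'b) monoid_scheme \<Rightarrow> nat \<Rightarrow> bool" where
  "p_group G p \<longleftrightarrow> group G \<and> finite (carrier G) \<and> (\<exists>n. order G = p ^ n)"

definition powerful :: "('a, 'b) monoid_scheme \<Rightarrow> nat \<Rightarrow> bool" where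
  "powerful G p \<longleftrightarrow> comm_subgroup G (carrier G) (carrier G) \<subseteq> pow_subgroup G p (carrier G)"

definition quasi_powerful :: "('a, 'b) monoid_scheme \<Rightarrow> nat \<Rightarrow> bool" where
  "quasi_powerful G p \<longleftrightarrow> powerful (G Mod (center G)) p"

definition powerfully_embedded :: "('a, 'b) monoid_scheme \<Rightarrow> nat \<Rightarrow> 'a set \<Rightarrow> bool" where
  "powerfully_embedded G p N \<longleftrightarrow> comm_subgroup G N (carrier G) \<subseteq> pow_subgroup G p N"

end

(*
  Let H = G^p Z(G) and M = H^p, a normal subgroup.  Since G/Z(G) is powerful, every commutator
  of G lies in H.  Call a normal subgroup K containing M good if [H,G] <= K.  If [H,G,G] <= K,
  then K is good: Z(G) centralises G, and for x, g in G put c = [x,g]; modulo K, c^p = 1 because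
  c lies in H, and d = [c,x] is central with d^p = 1 because d lies in [H,G] and in H.  Since
  x^g = x c, the class-two expansion gives (x^p)^g = x^p c^p d^(p choose 2) = x^p, as p divides
  (p choose 2) for odd p.  Hence every generator x^p of G^p commutes with G modulo K.
  As G is a p-group, the upper central series of G over M reaches G; descending it, every term
  is good, and the bottom term M is good, which is the claim.
*)

theory Submission
  imports Defs
begin

lemma (in group) mult_inv_cancel_left [simp]:
  "x \<in> carrier G \<Longrightarrow> y \<in> carrier G \<Longrightarrow> x \<otimes> (inv x \<otimes> y) = y"
  by (simp add: m_assoc [symmetric])

lemma (in group) inv_mult_cancel_left [simp]:
  "x \<in> carrier G \<Longrightarrow> y \<in> carrier G \<Longrightarrow> inv x \<otimes> (x \<otimes> y) = y"
  by (simp add: m_assoc [symmetric])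

lemma (in group) inv_commute:
  assumes x: "x \<in> carrier G" and y: "y \<in> carrier G" and xy: "x \<otimes> y = y \<otimes> x"
  shows "inv x \<otimes> y = y \<otimes> inv x"
proof -
  have "inv x \<otimes> y = inv x \<otimes> (x \<otimes> y) \<otimes> inv x"
    using x y by (simp add: xy m_assoc)
  also have "\<dots> = y \<otimes> inv x"
    using x y by (simp add: m_assoc [symmetric])
  finally show ?thesis .
qed

lemma (in group) conj_eq_self_iff:
  "g \<in> carrier G \<Longrightarrow> x \<in> carrier G \<Longrightarrow> g \<otimes> x \<otimes> inv g = x \<longleftrightarrow> x \<otimes> g = g \<otimes> x"
  using inv_solve_right' by (metis m_closed)

lemma (in group) conj_nat_pow:
  assumes a: "a \<in> carrier G" and b: "b \<in> carrier G"
  shows "inv b \<otimes> a [^] (n::nat) \<otimes> b = (inv b \<otimes> a \<otimes> b) [^] n"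
proof (induction n)
  case 0
  then show ?case
    using b by simp
next
  case (Suc n)
  have "inv b \<otimes> a [^] Suc n \<otimes> b = (inv b \<otimes> a [^] n \<otimes> b) \<otimes> (inv b \<otimes> a \<otimes> b)"
    using a b by (simp add: m_assoc)
  then show ?case
    using Suc by simp
qed

lemma (in group_hom) normal_vimage:
  assumes N: "N \<lhd> H"
  shows "{x \<in> carrier G. h x \<in> N} \<lhd> G"
proof -
  interpret N: normal N H
    by (rule N)
  show ?thesis
    unfolding G.normal_inv_iff
  proof (intro conjI ballI)
    show "subgroup {x \<in> carrier G. h x \<in> N} G"
      by (rule G.subgroupI) (auto simp: N.one_closed N.m_inv_closed N.m_closed)
    show "g \<otimes> x \<otimes> inv g \<in> {x \<in> carrier G. h x \<in> N}"
      if "g \<in> carrier G" "x \<in> {x \<in> carrier G. h x \<in> N}" for g x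
      using that N.inv_op_closed2 by simp
  qed
qed

lemma (in normal) group_hom_Mod: "group_hom G (G Mod H) ((#>) H)"
  by (intro group_hom.intro is_group factorgroup_is_group group_hom_axioms.intro r_coset_hom_Mod)

lemma (in normal) rcos_eq_self_iff: "x \<in> carrier G \<Longrightarrow> H #> x = H \<longleftrightarrow> x \<in> H"
  using coset_join1 coset_join2 is_subgroup by blast

definition commutator :: "('a, 'b) monoid_scheme \<Rightarrow> 'a \<Rightarrow> 'a \<Rightarrow> 'a" where
  "commutator G x y = inv\<^bsub>G\<^esub> x \<otimes>\<^bsub>G\<^esub> inv\<^bsub>G\<^esub> y \<otimes>\<^bsub>G\<^esub> x \<otimes>\<^bsub>G\<^esub> y"

lemma (in group) commutator_closed [simp]:
  "x \<in> carrier G \<Longrightarrow> y \<in> carrier G \<Longrightarrow> commutator G x y \<in> carrier G"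
  by (simp add: commutator_def)

lemma (in group) commutator_eq_one_iff:
  assumes "x \<in> carrier G" "y \<in> carrier G"
  shows "commutator G x y = \<one> \<longleftrightarrow> x \<otimes> y = y \<otimes> x"
proof -
  have "commutator G x y = inv (y \<otimes> x) \<otimes> (x \<otimes> y)"
    using assms by (simp add: commutator_def inv_mult_group m_assoc)
  then show ?thesis
    using assms by (metis inv_closed inv_equality inv_inv m_closed r_inv)
qed

lemma (in group_hom) hom_commutator:
  "x \<in> carrier G \<Longrightarrow> y \<in> carrier G \<Longrightarrow> h (commutator G x y) = commutator H (h x) (h y)"
  by (simp add: commutator_def)

lemma (in normal) commutator_mem_iff:
  assumes "x \<in> carrier G" "y \<in> carrier G"
  shows "commutator G x y \<in> H \<longleftrightarrow>
    (H #> x) \<otimes>\<^bsub>G Mod H\<^esub> (H #> y) = (H #> y) \<otimes>\<^bsub>G Mod H\<^esub> (H #> x)"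
proof -
  interpret \<pi>: group_hom G "G Mod H" "(#>) H" by (rule group_hom_Mod)
  have "commutator G x y \<in> H \<longleftrightarrow> H #> commutator G x y = H"
    using assms by (simp add: rcos_eq_self_iff)
  also have "\<dots> \<longleftrightarrow> commutator (G Mod H) (H #> x) (H #> y) = \<one>\<^bsub>G Mod H\<^esub>"
    using assms by (simp add: \<pi>.hom_commutator)
  also have "\<dots> \<longleftrightarrow> (H #> x) \<otimes>\<^bsub>G Mod H\<^esub> (H #> y) = (H #> y) \<otimes>\<^bsub>G Mod H\<^esub> (H #> x)"
    using assms by (intro \<pi>.H.commutator_eq_one_iff) simp_all
  finally show ?thesis .
qed

lemma centerI:
  "z \<in> carrier G \<Longrightarrow> (\<And>g. g \<in> carrier G \<Longrightarrow> z \<otimes>\<^bsub>G\<^esub> g = g \<otimes>\<^bsub>G\<^esub> z) \<Longrightarrow> z \<in> center G"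
  unfolding center_def by blast

lemma centerD:
  assumes "z \<in> center G"
  shows center_closed: "z \<in> carrier G"
    and center_commute: "g \<in> carrier G \<Longrightarrow> z \<otimes>\<^bsub>G\<^esub> g = g \<otimes>\<^bsub>G\<^esub> z"
  using assms unfolding center_def by blast+

lemma center_subset: "center G \<subseteq> carrier G"
  unfolding center_def by blast

lemma (in group) one_in_center: "\<one> \<in> center G"
  by (rule centerI) simp_all

lemma (in group) center_normal: "center G \<lhd> G"
  unfolding normal_inv_iff
proof (intro conjI ballI)
  show "subgroup (center G) G"
  proof (rule subgroupI)
    show "center G \<subseteq> carrier G"
      by (rule center_subset)
    from one_in_center show "center G \<noteq> {}"
      by blast
    show "inv z \<in> center G" if z: "z \<in> center G" for z
      by (rule centerI) (simp_all add: center_closed [OF z] center_commute [OF z] inv_commute)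
    show "z \<otimes> w \<in> center G" if z: "z \<in> center G" and w: "w \<in> center G" for z w
    proof (rule centerI)
      fix g assume g: "g \<in> carrier G"
      have zc: "z \<in> carrier G" and wc: "w \<in> carrier G"
        using z w by (simp_all add: center_closed)
      have "z \<otimes> w \<otimes> g = z \<otimes> (g \<otimes> w)"
        using zc wc g by (simp add: m_assoc center_commute [OF w g])
      also have "\<dots> = g \<otimes> (z \<otimes> w)"
        using zc wc g by (simp add: m_assoc [symmetric] center_commute [OF z g])
      finally show "z \<otimes> w \<otimes> g = g \<otimes> (z \<otimes> w)" .
    qed (simp add: center_closed [OF z] center_closed [OF w])
  qed
  show "g \<otimes> z \<otimes> inv g \<in> center G" if g: "g \<in> carrier G" and z: "z \<in> center G" for g z
  proof -
    have "g \<otimes> z \<otimes> inv g = z"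
      using g center_closed [OF z] by (simp add: m_assoc center_commute [OF z inv_closed [OF g]])
    then show ?thesis
      using z by simp
  qed
qed

lemma (in group_action) prime_dvd_card_nonfixed:
  assumes order: "order G = p ^ n" and p: "Factorial_Ring.prime p" and fin: "finite E"
  shows "p dvd card {x \<in> E. \<exists>g \<in> carrier G. \<phi> g x \<noteq> x}" (is "p dvd card ?M")
proof -
  have orbit_subset: "orbit G \<phi> x \<subseteq> ?M" if x: "x \<in> ?M" for x
  proof
    fix y assume y: "y \<in> orbit G \<phi> x"
    then have yE: "y \<in> E"
      using x element_image unfolding orbit_def by blast
    have "x \<in> orbit G \<phi> y"
      using orbit_sym x yE y by blast
    then obtain g where g: "g \<in> carrier G" "\<phi> g y = x"
      unfolding orbit_def by blast
    show "y \<in> ?M"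
    proof (rule ccontr)
      assume y_fixed: "y \<notin> ?M"
      then have "x = y"
        using yE g by auto
      then show False
        using x y_fixed by blast
    qed
  qed
  have orbit_dvd: "p dvd card (orbit G \<phi> x)" if x: "x \<in> ?M" for x
  proof -
    have "card (orbit G \<phi> x) dvd p ^ n"
      using orbit_stabilizer_theorem x order by (metis (no_types, lifting) dvd_triv_left mem_Collect_eq)
    then obtain i where i: "card (orbit G \<phi> x) = p ^ i"
      using divides_primepow_nat [OF p] by blast
    have "i \<noteq> 0"
    proof
      assume "i = 0"
      then have "orbit G \<phi> x = {x}"
        using i orbit_refl x by (simp add: card_1_singleton_iff) (metis singletonD mem_Collect_eq)
      then show False
        using x unfolding orbit_def by blast
    qed
    then show ?thesis
      using i by (simp add: dvd_power)
  qed
  have "?M = \<Union> (orbit G \<phi> ` ?M)"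
    using orbit_subset orbit_refl by blast
  moreover have "p dvd card (\<Union> (orbit G \<phi> ` ?M))"
  proof (rule dvd_partition)
    show "finite (\<Union> (orbit G \<phi> ` ?M))"
      using fin orbit_subset by (auto intro: finite_subset)
    show "\<forall>U \<in> orbit G \<phi> ` ?M. p dvd card U"
      using orbit_dvd by blast
    show "\<forall>U \<in> orbit G \<phi> ` ?M. \<forall>V \<in> orbit G \<phi> ` ?M. U \<noteq> V \<longrightarrow> U \<inter> V = {}"
      using disjoint_union unfolding orbits_def by blast
  qed
  ultimately show ?thesis
    by simp
qed

lemma (in group) p_group_center_nontrivial:
  assumes order: "order G = p ^ n" and p: "Factorial_Ring.prime p" and nontriv: "carrier G \<noteq> {\<one>}"
  shows "center G \<noteq> {\<one>}"
proof
  assume center_triv: "center G = {\<one>}"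
  interpret conjugation: group_action G "carrier G" "\<lambda>g. \<lambda>x \<in> carrier G. g \<otimes> x \<otimes> inv g"
    by (rule action_by_conjugation)
  have fin: "finite (carrier G)"
    using order p order_gt_0_iff_finite by (simp add: prime_gt_0_nat)
  have "{x \<in> carrier G. \<exists>g \<in> carrier G. (\<lambda>x \<in> carrier G. g \<otimes> x \<otimes> inv g) x \<noteq> x}
      = carrier G - center G"
    by (auto simp: center_def conj_eq_self_iff)
  then have "p dvd card (carrier G - center G)"
    using conjugation.prime_dvd_card_nonfixed [OF order p fin] by simp
  moreover have "n \<noteq> 0"
    using order nontriv order_one_triv_iff by auto
  then have "p dvd order G"
    using order by simp
  moreover have "card (carrier G - center G) = order G - 1"
    using center_triv fin by (simp add: order_def)
  moreover have "order G - (order G - 1) = 1"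
    using fin order_gt_0_iff_finite by simp
  ultimately have "p dvd 1"
    by (metis dvd_diff_nat)
  then show False
    using p by simp
qed

(* The preimage of Z(G/K); iterating it from K gives the upper central series of G over K. *)
definition rel_center :: "('a, 'b) monoid_scheme \<Rightarrow> 'a set \<Rightarrow> 'a set" where
  "rel_center G K = {x \<in> carrier G. K #>\<^bsub>G\<^esub> x \<in> center (G Mod K)}"

lemma (in normal) rel_center_normal: "rel_center G H \<lhd> G"
proof -
  interpret \<pi>: group_hom G "G Mod H" "(#>) H"
    by (rule group_hom_Mod)
  show ?thesis
    unfolding rel_center_def by (rule \<pi>.normal_vimage [OF \<pi>.H.center_normal])
qed

lemma (in normal) mem_rel_center_iff:
  "x \<in> rel_center G H \<longleftrightarrow> x \<in> carrier G \<and> (\<forall>g \<in> carrier G. commutator G x g \<in> H)"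
  by (auto simp: rel_center_def center_def carrier_FactGroup commutator_mem_iff)

lemma (in normal) subset_rel_center: "H \<subseteq> rel_center G H"
proof
  fix x assume x: "x \<in> H"
  then have "H #> x = \<one>\<^bsub>G Mod H\<^esub>"
    using rcos_eq_self_iff subset by auto
  then show "x \<in> rel_center G H"
    using x subset group.one_in_center [OF factorgroup_is_group] by (auto simp: rel_center_def)
qed

lemma (in normal) p_group_rel_center_psubset:
  assumes order: "order G = p ^ n" and p: "Factorial_Ring.prime p" and proper: "H \<noteq> carrier G"
  shows "H \<subset> rel_center G H"
proof -
  interpret Q: group "G Mod H"
    by (rule factorgroup_is_group)
  have fin: "finite (carrier G)"
    using order p order_gt_0_iff_finite by (simp add: prime_gt_0_nat)
  have "order (G Mod H) * card H = p ^ n"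
    using lagrange is_subgroup order by (simp add: order_def FactGroup_def)
  then have "order (G Mod H) dvd p ^ n"
    by (metis dvd_triv_left)
  then obtain m where "order (G Mod H) = p ^ m"
    using divides_primepow_nat [OF p] by auto
  moreover have "carrier (G Mod H) \<noteq> {\<one>\<^bsub>G Mod H\<^esub>}"
    using fact_group_trivial_iff [OF fin] proper by simp
  ultimately have "center (G Mod H) \<noteq> {\<one>\<^bsub>G Mod H\<^esub>}"
    by (rule Q.p_group_center_nontrivial [OF _ p])
  then obtain U where U: "U \<in> center (G Mod H)" "U \<noteq> \<one>\<^bsub>G Mod H\<^esub>"
    using Q.one_in_center by blast
  then obtain x where x: "x \<in> carrier G" "U = H #> x"
    using center_closed [OF U(1)] by (auto simp: carrier_FactGroup)
  then have "x \<in> rel_center G H"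
    using U by (simp add: rel_center_def)
  moreover have "x \<notin> H"
    using x U(2) by (simp add: rcos_eq_self_iff)
  ultimately show ?thesis
    using subset_rel_center by blast
qed

lemma (in group) p_group_rel_center_induct:
  assumes order: "order G = p ^ n" and p: "Factorial_Ring.prime p" and M: "M \<lhd> G"
    and top: "P (carrier G)"
    and step: "\<And>K. K \<lhd> G \<Longrightarrow> M \<subseteq> K \<Longrightarrow> P (rel_center G K) \<Longrightarrow> P K"
  shows "P M"
proof -
  have fin: "finite (carrier G)"
    using order p order_gt_0_iff_finite by (simp add: prime_gt_0_nat)
  have "P K" if "K \<lhd> G" "M \<subseteq> K" for K
    using that
  proof (induction "card (carrier G) - card K" arbitrary: K rule: less_induct)
    case less
    interpret K: normal K G
      by (rule less.prems(1))
    show ?case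
    proof (cases "K = carrier G")
      case True
      then show ?thesis
        using top by simp
    next
      case False
      then have "K \<subset> rel_center G K"
        by (rule K.p_group_rel_center_psubset [OF order p])
      moreover have "rel_center G K \<subseteq> carrier G"
        using K.rel_center_normal normal_imp_subgroup subgroup.subset by blast
      ultimately have "card K < card (rel_center G K)" "card (rel_center G K) \<le> card (carrier G)"
        using fin by (simp_all add: psubset_card_mono card_mono finite_subset)
      then have "card (carrier G) - card (rel_center G K) < card (carrier G) - card K"
        by linarith
      then have "P (rel_center G K)"
        using less.hyps K.rel_center_normal less.prems(2) \<open>K \<subset> rel_center G K\<close> by auto
      then show ?thesis
        using step less.prems by blast
    qed
  qed
  then show ?thesis
    using M by blast
qed

lemma Suc_choose_two: "Suc n choose 2 = n + (n choose 2)"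
  by (simp add: numeral_2_eq_2)

lemma odd_choose_two: "odd p \<Longrightarrow> p choose 2 = p * ((p - 1) div 2)"
  by (auto simp: choose_two elim: oddE)

lemma (in group) mult_pow_central_commutator:
  assumes a: "a \<in> carrier G" and c: "c \<in> carrier G" and central: "commutator G c a \<in> center G"
  shows "(a \<otimes> c) [^] (n::nat) = a [^] n \<otimes> c [^] n \<otimes> commutator G c a [^] (n choose 2)"
proof -
  define d where "d = commutator G c a"
  have d: "d \<in> carrier G"
    using a c by (simp add: d_def)
  have d_pow_commute: "d [^] k \<otimes> y = y \<otimes> d [^] k" if "y \<in> carrier G" for y and k :: nat
    using group_commutes_pow center_commute [OF central that] that d by (simp add: d_def)
  have ca: "c \<otimes> a = a \<otimes> c \<otimes> d"
    using a c by (simp add: d_def commutator_def m_assoc)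
  have c_pow_a: "c [^] k \<otimes> a = a \<otimes> c [^] k \<otimes> d [^] k" for k :: nat
  proof (induction k)
    case (Suc k)
    have "c [^] Suc k \<otimes> a = (c [^] k \<otimes> a) \<otimes> c \<otimes> d"
      using a c d by (simp add: nat_pow_Suc2 m_assoc ca)
    also have "\<dots> = a \<otimes> c [^] k \<otimes> (d [^] k \<otimes> c) \<otimes> d"
      using a c d by (simp add: Suc m_assoc)
    also have "\<dots> = a \<otimes> c [^] Suc k \<otimes> d [^] Suc k"
      using a c d by (simp add: d_pow_commute [OF c] m_assoc)
    finally show ?case .
  qed (use a in simp)
  show ?thesis
    unfolding d_def [symmetric]
  proof (induction n)
    case (Suc n)
    have "(a \<otimes> c) [^] Suc n = a [^] n \<otimes> c [^] n \<otimes> (d [^] (n choose 2) \<otimes> (a \<otimes> c))"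
      using Suc a c d by (simp add: m_assoc)
    also have "\<dots> = a [^] n \<otimes> (c [^] n \<otimes> a) \<otimes> c \<otimes> d [^] (n choose 2)"
      using a c d by (simp add: d_pow_commute [of "a \<otimes> c"] m_assoc)
    also have "\<dots> = a [^] n \<otimes> a \<otimes> c [^] n \<otimes> (d [^] n \<otimes> c) \<otimes> d [^] (n choose 2)"
      using a c d by (simp add: c_pow_a m_assoc)
    also have "\<dots> = a [^] Suc n \<otimes> c [^] Suc n \<otimes> (d [^] n \<otimes> d [^] (n choose 2))"
      using a c d by (simp add: d_pow_commute [OF c] m_assoc)
    also have "\<dots> = a [^] Suc n \<otimes> c [^] Suc n \<otimes> d [^] (Suc n choose 2)"
      using d by (simp add: nat_pow_mult Suc_choose_two)
    finally show ?case .
  qed (simp add: d choose_two)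
qed

lemma (in group) commutator_pow_eq_one:
  assumes a: "a \<in> carrier G" and b: "b \<in> carrier G" and p: "odd (p::nat)"
    and central: "commutator G (commutator G a b) a \<in> center G"
    and c_pow: "commutator G a b [^] p = \<one>"
    and d_pow: "commutator G (commutator G a b) a [^] p = \<one>"
  shows "commutator G (a [^] p) b = \<one>"
proof -
  define c where "c = commutator G a b"
  define d where "d = commutator G c a"
  have c: "c \<in> carrier G" and d: "d \<in> carrier G"
    using a b by (simp_all add: c_def d_def)
  have a_conj: "inv b \<otimes> a \<otimes> b = a \<otimes> c"
    using a b by (simp add: c_def commutator_def m_assoc)
  have d_choose: "d [^] (p choose 2) = \<one>"
    using d d_pow p by (simp add: odd_choose_two nat_pow_pow [symmetric] c_def d_def)
  have "commutator G (a [^] p) b = inv (a [^] p) \<otimes> (inv b \<otimes> a [^] p \<otimes> b)"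
    using a b by (simp add: commutator_def m_assoc)
  also have "\<dots> = inv (a [^] p) \<otimes> (a \<otimes> c) [^] p"
    using a b by (simp add: conj_nat_pow a_conj)
  also have "\<dots> = inv (a [^] p) \<otimes> (a [^] p \<otimes> c [^] p \<otimes> d [^] (p choose 2))"
    using a c central by (simp add: mult_pow_central_commutator c_def d_def)
  also have "\<dots> = \<one>"
    using a c_pow d_choose by (simp add: c_def)
  finally show ?thesis .
qed

lemma (in normal) commutator_pow_mem:
  assumes p: "odd (p::nat)" and x: "x \<in> carrier G" and g: "g \<in> carrier G"
    and c_pow: "commutator G x g [^] p \<in> H"
    and d_pow: "commutator G (commutator G x g) x [^] p \<in> H"
    and central: "commutator G (commutator G x g) x \<in> rel_center G H"
  shows "commutator G (x [^] p) g \<in> H"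
proof -
  interpret \<pi>: group_hom G "G Mod H" "(#>) H"
    by (rule group_hom_Mod)
  have "commutator (G Mod H) ((H #> x) [^]\<^bsub>G Mod H\<^esub> p) (H #> g) = \<one>\<^bsub>G Mod H\<^esub>"
  proof (rule \<pi>.H.commutator_pow_eq_one)
    show "commutator (G Mod H) (commutator (G Mod H) (H #> x) (H #> g)) (H #> x) \<in> center (G Mod H)"
      using central x g by (simp add: rel_center_def \<pi>.hom_commutator)
    show "commutator (G Mod H) (H #> x) (H #> g) [^]\<^bsub>G Mod H\<^esub> p = \<one>\<^bsub>G Mod H\<^esub>"
      using c_pow x g by (simp add: \<pi>.hom_commutator [symmetric] \<pi>.hom_nat_pow [symmetric] rcos_eq_self_iff)
    show "commutator (G Mod H) (commutator (G Mod H) (H #> x) (H #> g)) (H #> x) [^]\<^bsub>G Mod H\<^esub> p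
        = \<one>\<^bsub>G Mod H\<^esub>"
      using d_pow x g by (simp add: \<pi>.hom_commutator [symmetric] \<pi>.hom_nat_pow [symmetric] rcos_eq_self_iff)
  qed (use p x g in auto)
  then show ?thesis
    using x g by (simp add: \<pi>.hom_commutator [symmetric] \<pi>.hom_nat_pow [symmetric] rcos_eq_self_iff)
qed

lemma (in group) pow_subgroup_subset: "S \<subseteq> carrier G \<Longrightarrow> pow_subgroup G p S \<subseteq> carrier G"
  unfolding pow_subgroup_def by (intro generate_incl) auto

lemma (in group) pow_subgroup_normal:
  assumes S: "S \<subseteq> carrier G" and conj: "\<And>s g. s \<in> S \<Longrightarrow> g \<in> carrier G \<Longrightarrow> g \<otimes> s \<otimes> inv g \<in> S"
  shows "pow_subgroup G p S \<lhd> G"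
  unfolding pow_subgroup_def
proof (rule normal_generateI)
  show "{x [^] p |x. x \<in> S} \<subseteq> carrier G"
    using S by auto
  fix h g assume h: "h \<in> {x [^] p |x. x \<in> S}" and g: "g \<in> carrier G"
  then obtain x where x: "x \<in> S" "h = x [^] p"
    by blast
  have "g \<otimes> h \<otimes> inv g = (g \<otimes> x \<otimes> inv g) [^] p"
    using conj_nat_pow [of x "inv g" p] x S g by auto
  then show "g \<otimes> h \<otimes> inv g \<in> {x [^] p |x. x \<in> S}"
    using conj [OF x(1) g] by blast
qed

lemma (in group) conj_mem_set_mult_center:
  assumes N: "N \<lhd> G" and h: "h \<in> N <#> center G" and g: "g \<in> carrier G"
  shows "g \<otimes> h \<otimes> inv g \<in> N <#> center G"
proof -
  obtain q z where q: "q \<in> N" and z: "z \<in> center G" and h_eq: "h = q \<otimes> z"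
    using h unfolding set_mult_def by blast
  have qc: "q \<in> carrier G"
    by (rule subgroup.mem_carrier [OF normal_imp_subgroup [OF N] q])
  have "g \<otimes> h \<otimes> inv g = (g \<otimes> q \<otimes> inv g) \<otimes> z"
    using g qc center_closed [OF z] by (simp add: h_eq m_assoc center_commute [OF z inv_closed [OF g]])
  moreover have "g \<otimes> q \<otimes> inv g \<in> N"
    using normal.inv_op_closed2 [OF N g q] .
  ultimately show ?thesis
    using z unfolding set_mult_def by blast
qed

lemma (in group) quasi_powerful_commutator_mem:
  assumes qp: "quasi_powerful G p" and x: "x \<in> carrier G" and y: "y \<in> carrier G"
  shows "commutator G x y \<in> pow_subgroup G p (carrier G) <#> center G"
proof -
  let ?Z = "center G" and ?Q = "G Mod center G"
  interpret \<pi>: group_hom G ?Q "(#>) ?Z"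
    by (rule normal.group_hom_Mod [OF center_normal])
  have Z: "subgroup ?Z G"
    by (rule normal_imp_subgroup [OF center_normal])
  have "{u [^]\<^bsub>?Q\<^esub> p | u. u \<in> carrier ?Q} = (#>) ?Z ` {a [^] p | a. a \<in> carrier G}"
  proof -
    have "(?Z #> a) [^]\<^bsub>?Q\<^esub> p = ?Z #> a [^] p" if "a \<in> carrier G" for a
      using that by (simp add: \<pi>.hom_nat_pow)
    then show ?thesis
      unfolding carrier_FactGroup by blast
  qed
  then have pow_Q: "pow_subgroup ?Q p (carrier ?Q) = (#>) ?Z ` pow_subgroup G p (carrier G)"
    using \<pi>.generate_img [of "{a [^] p | a. a \<in> carrier G}"] unfolding pow_subgroup_def by auto
  have "?Z #> commutator G x y = commutator ?Q (?Z #> x) (?Z #> y)"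
    using x y by (rule \<pi>.hom_commutator)
  also have "\<dots> \<in> comm_subgroup ?Q (carrier ?Q) (carrier ?Q)"
    unfolding comm_subgroup_def commutator_def using x y
    by (intro generate.incl) (auto simp: carrier_FactGroup)
  also have "\<dots> \<subseteq> pow_subgroup ?Q p (carrier ?Q)"
    using qp by (simp add: quasi_powerful_def powerful_def)
  finally obtain q where q: "q \<in> pow_subgroup G p (carrier G)" and "?Z #> commutator G x y = ?Z #> q"
    unfolding pow_Q by blast
  moreover have "commutator G x y \<in> ?Z #> commutator G x y"
    using x y Z by (simp add: rcos_self)
  ultimately obtain z where z: "z \<in> ?Z" and "commutator G x y = z \<otimes> q"
    unfolding r_coset_def by blast
  moreover have "q \<in> carrier G"
    using q pow_subgroup_subset by blast
  ultimately have "commutator G x y = q \<otimes> z"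
    by (simp add: center_commute)
  then show ?thesis
    using q z unfolding set_mult_def by blast
qed

lemma (in group) pow_center_subset_rel_center:
  fixes p :: nat
  defines "H \<equiv> pow_subgroup G p (carrier G) <#> center G"
  assumes p: "odd p" and K: "K \<lhd> G"
    and comm: "\<And>x y. x \<in> carrier G \<Longrightarrow> y \<in> carrier G \<Longrightarrow> commutator G x y \<in> H"
    and pow: "pow_subgroup G p H \<subseteq> K"
    and upper: "H \<subseteq> rel_center G (rel_center G K)"
  shows "H \<subseteq> rel_center G K"
proof -
  interpret K: normal K G
    by (rule K)
  interpret R: normal "rel_center G K" G
    by (rule K.rel_center_normal)
  have pow_mem: "h [^] p \<in> K" if "h \<in> H" for h
    using that pow unfolding pow_subgroup_def by (blast intro: generate.incl)
  have "x [^] p \<in> rel_center G K" if x: "x \<in> carrier G" for x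
    unfolding K.mem_rel_center_iff
  proof (intro conjI ballI)
    fix g assume g: "g \<in> carrier G"
    have "commutator G x g \<in> rel_center G (rel_center G K)"
      using comm [OF x g] upper by blast
    then have "commutator G (commutator G x g) x \<in> rel_center G K"
      using x R.mem_rel_center_iff by blast
    then show "commutator G (x [^] p) g \<in> K"
      using K.commutator_pow_mem [OF p x g] pow_mem comm x g by simp
  qed (use x in simp)
  then have "pow_subgroup G p (carrier G) \<subseteq> rel_center G K"
    unfolding pow_subgroup_def by (intro generate_subgroup_incl R.is_subgroup) blast
  moreover have "center G \<subseteq> rel_center G K"
  proof
    fix z assume z: "z \<in> center G"
    have "commutator G z g = \<one>" if "g \<in> carrier G" for g
      using commutator_eq_one_iff [OF center_closed [OF z] that] center_commute [OF z that] by simp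
    then have "\<forall>g \<in> carrier G. commutator G z g \<in> K"
      using K.one_closed by simp
    then show "z \<in> rel_center G K"
      using center_closed [OF z] K.mem_rel_center_iff by blast
  qed
  ultimately show ?thesis
    unfolding H_def set_mult_def using R.m_closed by blast
qed

theorem proposition3p6:
  fixes G (structure) and p :: nat
  assumes "Factorial_Ring.prime p" and "odd p"
    and "p_group G p"
    and "quasi_powerful G p"
  shows "powerfully_embedded G p (pow_subgroup G p (carrier G) <#> center G)"
proof -
  obtain n where "group G" and order: "order G = p ^ n"
    using assms(3) unfolding p_group_def by blast
  interpret group G
    by fact
  define H where "H = pow_subgroup G p (carrier G) <#> center G"
  have H_carrier: "H \<subseteq> carrier G"
    unfolding H_def by (intro setmult_subset_G pow_subgroup_subset center_subset) simp
  have P: "pow_subgroup G p (carrier G) \<lhd> G"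
    by (rule pow_subgroup_normal) auto
  have M: "pow_subgroup G p H \<lhd> G"
    using H_carrier conj_mem_set_mult_center [OF P] unfolding H_def by (rule pow_subgroup_normal)
  have "H \<subseteq> rel_center G (pow_subgroup G p H)"
  proof (rule p_group_rel_center_induct [OF order assms(1) M])
    show "H \<subseteq> rel_center G (carrier G)"
      using H_carrier by (auto simp: normal.mem_rel_center_iff [OF normal_self])
    show "H \<subseteq> rel_center G K"
      if "K \<lhd> G" "pow_subgroup G p H \<subseteq> K" "H \<subseteq> rel_center G (rel_center G K)" for K
      using pow_center_subset_rel_center [OF assms(2) that(1) quasi_powerful_commutator_mem [OF assms(4)]]
        that unfolding H_def by blast
  qed
  then show ?thesis
    unfolding powerfully_embedded_def comm_subgroup_def H_def [symmetric]
    using normal_imp_subgroup [OF M]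
    by (intro generate_subgroup_incl) (auto simp: normal.mem_rel_center_iff [OF M] commutator_def)
qed

end
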